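(* Let $E\subseteq\mathbb{R}$, and let $\mathbf{AC}(E)$ be the set of Abel continuous functions on $E$, regarded as a subset of the space of all continuous real functions on $E$ equipped with the topology of uniform convergence on $E$. Then $\mathbf{AC}(E)$ is closed: if $f$ is a continuous function on $E$ and there is a sequence $(f_n)$ in $\mathbf{AC}(E)$ converging uniformly on $E$ to $f$, then $f\in\mathbf{AC}(E)$.
   Context: A sequence $(p_n)_{n\ge0}$ is Abel convergent to $\ell$ if $\sum_{k=0}^{\infty}p_k x^k$ converges for every $0\le x<1$ and $\lim_{x\to 1^-}(1-x)\sum_{k=0}^{\infty}p_k x^k=\ell$. A function $g:E\to\mathbb{R}$ is Abel continuous on $E$ if for every sequence $(p_n)$ in $E$ Abel convergent to some $\ell\in E$, $(g(p_n))$ is Abel convergent to $g(\ell)$. *)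

theory Defs
  imports "HOL-Analysis.Analysis"
begin

definition abel_convergent :: "(nat \<Rightarrow> real) \<Rightarrow> real \<Rightarrow> bool" where
  "abel_convergent p l \<longleftrightarrow>
     (\<forall>x. 0 \<le> x \<and> x < 1 \<longrightarrow> summable (\<lambda>k. p k * x ^ k)) \<and>
     ((\<lambda>x. (1 - x) * (\<Sum>k. p k * x ^ k)) \<longlongrightarrow> l) (at_left 1)"

definition abel_continuous_on :: "real set \<Rightarrow> (real \<Rightarrow> real) \<Rightarrow> bool" where
  "abel_continuous_on E g \<longleftrightarrow>
     (\<forall>p l. (\<forall>n. p n \<in> E) \<longrightarrow> l \<in> E \<longrightarrow> abel_convergent p l \<longrightarrow>
        abel_convergent (\<lambda>n. g (p n)) (g l))"

end

theory Submission
  imports Defs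
begin

text \<open>If two sequences differ by at most \<open>e\<close> termwise, their Abel means differ by at most \<open>e\<close>,
  since \<open>(1 - x) * (\<Sum>k. x ^ k) = 1\<close>. Hence Abel convergence is preserved under uniform
  approximation of sequences, and composing an Abel convergent sequence with \<open>fs N\<close> uniformly
  approximates its composition with \<open>f\<close>.\<close>

lemma summable_bounded_times_power:
  fixes d :: "nat \<Rightarrow> real"
  assumes "\<And>k. \<bar>d k\<bar> \<le> B" "0 \<le> x" "x < 1"
  shows "summable (\<lambda>k. d k * x ^ k)"
proof (rule summable_comparison_test)
  show "summable (\<lambda>k. B * x ^ k)"
    using assms by (intro summable_mult summable_geometric) auto
  show "\<exists>N. \<forall>k\<ge>N. norm (d k * x ^ k) \<le> B * x ^ k"
    using assms by (auto simp: abs_mult intro!: mult_right_mono)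
qed

lemma abs_abel_mean_le:
  fixes d :: "nat \<Rightarrow> real"
  assumes d: "\<And>k. \<bar>d k\<bar> \<le> B" and x: "0 \<le> x" "x < 1"
  shows "\<bar>(1 - x) * (\<Sum>k. d k * x ^ k)\<bar> \<le> B"
proof -
  have abs_d: "\<And>k. \<bar>\<bar>d k\<bar>\<bar> \<le> B"
    using d by auto
  have geom: "summable (\<lambda>k. x ^ k)"
    using x by (intro summable_geometric) auto
  have "\<bar>\<Sum>k. d k * x ^ k\<bar> \<le> (\<Sum>k. \<bar>d k * x ^ k\<bar>)"
    using summable_bounded_times_power[OF abs_d x] x by (intro summable_rabs) (simp add: abs_mult)
  also have "\<dots> = (\<Sum>k. \<bar>d k\<bar> * x ^ k)"
    using x by (simp add: abs_mult)
  also have "\<dots> \<le> (\<Sum>k. B * x ^ k)"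
    using d x summable_bounded_times_power[OF abs_d x] summable_mult[OF geom, of B]
    by (intro suminf_le) (auto intro: mult_right_mono)
  also have "\<dots> = B / (1 - x)"
    using suminf_mult[OF geom, of B] suminf_geometric[of x] x by simp
  finally have "(1 - x) * \<bar>\<Sum>k. d k * x ^ k\<bar> \<le> B"
    using x by (simp add: field_simps)
  then show ?thesis
    using x by (simp add: abs_mult)
qed

lemma abel_convergent_uniform_approx:
  fixes q :: "nat \<Rightarrow> real"
  assumes approx: "\<And>e. e > 0 \<Longrightarrow>
    \<exists>p l. abel_convergent p l \<and> (\<forall>k. \<bar>q k - p k\<bar> \<le> e) \<and> \<bar>m - l\<bar> \<le> e"
  shows "abel_convergent q m"
  unfolding abel_convergent_def
proof (intro conjI allI impI)
  fix x :: real assume x: "0 \<le> x \<and> x < 1"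
  obtain p l where p: "abel_convergent p l" and close: "\<forall>k. \<bar>q k - p k\<bar> \<le> 1"
    using approx[of 1] by auto
  have "summable (\<lambda>k. p k * x ^ k + (q k - p k) * x ^ k)"
  proof (rule summable_add)
    show "summable (\<lambda>k. p k * x ^ k)"
      using p x by (auto simp: abel_convergent_def)
    show "summable (\<lambda>k. (q k - p k) * x ^ k)"
      using close x by (intro summable_bounded_times_power[of _ 1]) auto
  qed
  then show "summable (\<lambda>k. q k * x ^ k)"
    by (simp add: algebra_simps)
next
  show "((\<lambda>x. (1 - x) * (\<Sum>k. q k * x ^ k)) \<longlongrightarrow> m) (at_left 1)"
    unfolding tendsto_iff
  proof (intro allI impI)
    fix e :: real assume "e > 0"
    then obtain p l where p: "abel_convergent p l"
      and close: "\<forall>k. \<bar>q k - p k\<bar> \<le> e/3" and lim_close: "\<bar>m - l\<bar> \<le> e/3"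
      using approx[of "e/3"] by auto
    have "\<forall>\<^sub>F x in at_left 1. dist ((1 - x) * (\<Sum>k. p k * x ^ k)) l < e/3"
      using p \<open>e > 0\<close> unfolding abel_convergent_def tendsto_iff
      by (meson divide_pos_pos zero_less_numeral)
    moreover have "\<forall>\<^sub>F x in at_left (1::real). x \<in> {0<..<1}"
      by (rule eventually_at_left_real) simp
    ultimately show "\<forall>\<^sub>F x in at_left 1. dist ((1 - x) * (\<Sum>k. q k * x ^ k)) m < e"
    proof eventually_elim
      case (elim x)
      then have x: "0 \<le> x" "x < 1" by auto
      have "(\<Sum>k. q k * x ^ k) = (\<Sum>k. p k * x ^ k + (q k - p k) * x ^ k)"
        by (simp add: algebra_simps)
      also have "\<dots> = (\<Sum>k. p k * x ^ k) + (\<Sum>k. (q k - p k) * x ^ k)"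
        using p x close summable_bounded_times_power[of "\<lambda>k. q k - p k" "e/3" x]
        by (intro suminf_add[symmetric]) (auto simp: abel_convergent_def)
      finally have "(1 - x) * (\<Sum>k. q k * x ^ k)
          = (1 - x) * (\<Sum>k. p k * x ^ k) + (1 - x) * (\<Sum>k. (q k - p k) * x ^ k)"
        by (simp add: algebra_simps)
      moreover have "\<bar>(1 - x) * (\<Sum>k. (q k - p k) * x ^ k)\<bar> \<le> e/3"
        using close x by (intro abs_abel_mean_le) auto
      ultimately show ?case
        using elim(1) lim_close unfolding dist_real_def by linarith
    qed
  qed
qed

theorem theorem9:
  fixes E :: "real set" and f :: "real \<Rightarrow> real" and fs :: "nat \<Rightarrow> real \<Rightarrow> real"
  assumes "continuous_on E f"
    and "\<And>n. continuous_on E (fs n)"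
    and "\<And>n. abel_continuous_on E (fs n)"
    and "uniform_limit E fs f sequentially"
  shows "abel_continuous_on E f"
  unfolding abel_continuous_on_def
proof (intro allI impI)
  fix p l assume pE: "\<forall>n. p n \<in> E" and lE: "l \<in> E" and p: "abel_convergent p l"
  show "abel_convergent (\<lambda>n. f (p n)) (f l)"
  proof (rule abel_convergent_uniform_approx)
    fix e :: real assume "e > 0"
    then obtain N where N: "\<forall>y\<in>E. dist (fs N y) (f y) < e"
      using assms(4) unfolding uniform_limit_iff eventually_sequentially by blast
    have "abel_convergent (\<lambda>n. fs N (p n)) (fs N l)"
      using assms(3)[of N] pE lE p unfolding abel_continuous_on_def by blast
    moreover have "\<forall>k. \<bar>f (p k) - fs N (p k)\<bar> \<le> e" "\<bar>f l - fs N l\<bar> \<le> e"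
      using N pE lE by (auto simp: dist_real_def abs_minus_commute less_imp_le)
    ultimately show "\<exists>q m. abel_convergent q m \<and> (\<forall>k. \<bar>f (p k) - q k\<bar> \<le> e) \<and> \<bar>f l - m\<bar> \<le> e"
      by blast
  qed
qed

end
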